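(* Let $G$ be a non-discrete, totally disconnected, torsion-free locally compact abelian group. Then there exists a nonzero continuous homomorphism $\widehat{\mathbb{Q}/\mathbb{Z}}\to G$, i.e. $\mathrm{Hom}(\widehat{\mathbb{Q}/\mathbb{Z}},G)\neq 0$.
   Context: $\mathbb{Q}/\mathbb{Z}$ carries the discrete topology, and $\widehat{\mathbb{Q}/\mathbb{Z}}=\mathrm{Hom}(\mathbb{Q}/\mathbb{Z},\mathbb{R}/\mathbb{Z})$ is its Pontryagin dual (a compact group). $\mathrm{Hom}(A,B)$ is the group of continuous homomorphisms $A\to B$. *)

theory Defs
  imports "HOL-Analysis.Analysis" "HOL-Algebra.Group"
begin

definition topological_group :: "('a, 'b) monoid_scheme \<Rightarrow> 'a topology \<Rightarrow> bool" where
  "topological_group G T \<longleftrightarrow> group G \<and> topspace T = carrier G \<and>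
     continuous_map (prod_topology T T) T (\<lambda>(x, y). x \<otimes>\<^bsub>G\<^esub> y) \<and>
     continuous_map T T (\<lambda>x. inv\<^bsub>G\<^esub> x)"

definition LCA_group :: "('a, 'b) monoid_scheme \<Rightarrow> 'a topology \<Rightarrow> bool" where
  "LCA_group G T \<longleftrightarrow> topological_group G T \<and> comm_group G \<and>
     Hausdorff_space T \<and> locally_compact_space T"

definition totally_disconnected_space :: "'a topology \<Rightarrow> bool" where
  "totally_disconnected_space T \<longleftrightarrow>
     (\<forall>x \<in> topspace T. connected_component_of_set T x = {x})"

definition torsion_free :: "('a, 'b) monoid_scheme \<Rightarrow> bool" where
  "torsion_free G \<longleftrightarrow>
     (\<forall>x \<in> carrier G. \<forall>n::nat. n > 0 \<and> x [^]\<^bsub>G\<^esub> n = \<one>\<^bsub>G\<^esub> \<longrightarrow> x = \<one>\<^bsub>G\<^esub>)"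

text \<open>A continuous character of Q/Z
  (discrete) is the same as a homomorphism Q \<rightarrow> R/Z killing Z.  We realise R/Z as the
  unit circle in \<complex> (via t \<mapsto> exp(2 pi i t)), so a character is a function
  chi :: rat \<Rightarrow> complex with chi(a+b) = chi a * chi b, |chi a| = 1 and chi 1 = 1
  (hence chi vanishes on Z, i.e. factors through Q/Z).\<close>
definition QZ_dual_carrier :: "(rat \<Rightarrow> complex) set" where
  "QZ_dual_carrier = {c. (\<forall>a. norm (c a) = 1) \<and> (\<forall>a b. c (a + b) = c a * c b) \<and> c 1 = 1}"

definition QZ_dual :: "(rat \<Rightarrow> complex) monoid" where
  "QZ_dual = \<lparr>carrier = QZ_dual_carrier, mult = (\<lambda>c d a. c a * d a), one = (\<lambda>a. 1)\<rparr>"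

text \<open>Compact-open topology on the dual; since Q/Z is discrete this is the topology
  of pointwise convergence, i.e. the subspace topology of the product topology.\<close>
definition QZ_dual_topology :: "(rat \<Rightarrow> complex) topology" where
  "QZ_dual_topology = subtopology (product_topology (\<lambda>_. euclidean) UNIV) QZ_dual_carrier"

end

theory Submission
  imports Defs "HOL-Algebra.Generated_Groups"
begin

text \<open>
  A character \<open>c\<close> of the discrete group \<open>\<rat>/\<int>\<close> is a profinite integer: \<open>c (1/n!)\<close> is an
  \<open>n!\<close>-th root of unity \<open>exp (2\<pi>i e_n/n!)\<close>, and the residues \<open>e_n mod n!\<close> are compatible.
  By van Dantzig's theorem a totally disconnected locally compact group has a compact open
  subgroup \<open>K\<close>, which is nontrivial when the group is not discrete. For \<open>x \<in> K\<close> some power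
  \<open>x^d\<close> lies in any given open subgroup (pigeonhole on the finitely many cosets meeting \<open>K\<close>),
  hence so do all \<open>x^(n! q)\<close> with \<open>n \<ge> d\<close>; so \<open>x^(e_n)\<close> is Cauchy along the open subgroups
  and converges in \<open>K\<close>. The limit \<open>x^c\<close> is continuous and multiplicative in \<open>c\<close>, and the
  standard character \<open>q \<mapsto> exp (2\<pi>iq)\<close>, i.e. the profinite integer \<open>1\<close>, is sent to \<open>x \<noteq> 1\<close>.
\<close>

definition root_unity :: "nat \<Rightarrow> nat \<Rightarrow> complex" where
  "root_unity N j = exp (2 * of_real pi * \<i> * of_nat j / of_nat N)"

lemma root_unity_eq_iff: "N > 0 \<Longrightarrow> root_unity N j = root_unity N k \<longleftrightarrow> j mod N = k mod N"
  unfolding root_unity_def by (rule complex_root_unity_eq) simp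

lemma root_unity_pow: "root_unity N j ^ k = root_unity N (j * k)"
  unfolding root_unity_def by (simp add: exp_of_nat_mult[symmetric] algebra_simps)

lemma root_unity_mult: "root_unity N j * root_unity N k = root_unity N (j + k)"
  unfolding root_unity_def by (simp add: exp_add[symmetric] add_divide_distrib algebra_simps)

lemma root_unity_cancel_factor: "k > 0 \<Longrightarrow> root_unity (N * k) (j * k) = root_unity N j"
  unfolding root_unity_def by (simp add: field_simps)

lemma QZ_char_zero:
  assumes "c \<in> QZ_dual_carrier" shows "c 0 = 1"
proof -
  have "c (0 + 0) = c 0 * c 0" and "norm (c 0) = 1"
    using assms unfolding QZ_dual_carrier_def by blast+
  then show ?thesis by (metis add_0 mult_cancel_left1 norm_zero zero_neq_one)
qed

lemma QZ_char_of_nat_mult: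
  assumes "c \<in> QZ_dual_carrier" shows "c (of_nat k * q) = c q ^ k"
proof (induction k)
  case 0 then show ?case using QZ_char_zero[OF assms] by simp
next
  case (Suc k)
  have "c (of_nat (Suc k) * q) = c (q + of_nat k * q)" by (simp add: algebra_simps)
  also have "\<dots> = c q * c (of_nat k * q)" using assms unfolding QZ_dual_carrier_def by blast
  finally show ?case using Suc by simp
qed

lemma QZ_char_unit_fraction_pow:
  assumes "c \<in> QZ_dual_carrier" "N > 0" shows "c (1 / of_nat N) ^ N = 1"
proof -
  have "c (1 / of_nat N) ^ N = c (of_nat N * (1 / of_nat N))"
    by (rule QZ_char_of_nat_mult[OF assms(1), symmetric])
  also have "of_nat N * (1 / of_nat N) = (1::rat)" using assms(2) by simp
  also have "c 1 = 1" using assms(1) unfolding QZ_dual_carrier_def by blast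
  finally show ?thesis .
qed

lemma QZ_char_unit_fraction_root_unity:
  assumes "c \<in> QZ_dual_carrier" "N > 0" shows "\<exists>j<N. c (1 / of_nat N) = root_unity N j"
proof -
  have "c (1 / of_nat N) \<in> {z. z ^ N = 1}"
    using QZ_char_unit_fraction_pow[OF assms] by simp
  also have "\<dots> = {exp (2 * of_real pi * \<i> * of_nat j / of_nat N) | j. j < N}"
    by (rule complex_roots_unity) (use assms(2) in simp)
  finally show ?thesis unfolding root_unity_def by blast
qed

definition dual_index :: "nat \<Rightarrow> (rat \<Rightarrow> complex) \<Rightarrow> nat" where
  "dual_index n c = (SOME j. j < fact n \<and> c (1 / of_nat (fact n)) = root_unity (fact n) j)"

lemma dual_index:
  assumes "c \<in> QZ_dual_carrier"
  shows "dual_index n c < fact n" "c (1 / of_nat (fact n)) = root_unity (fact n) (dual_index n c)"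
proof -
  have "\<exists>j<fact n. c (1 / of_nat (fact n)) = root_unity (fact n) j"
    using QZ_char_unit_fraction_root_unity[OF assms, of "fact n"] by simp
  from someI_ex[OF this[unfolded Bex_def]] show
    "dual_index n c < fact n" "c (1 / of_nat (fact n)) = root_unity (fact n) (dual_index n c)"
    unfolding dual_index_def by blast+
qed

lemma dual_index_eqI:
  assumes "c \<in> QZ_dual_carrier" "c (1 / of_nat (fact n)) = root_unity (fact n) j"
  shows "dual_index n c = j mod fact n"
  using dual_index[OF assms(1), of n] assms(2) root_unity_eq_iff[of "fact n"] by simp

lemma dual_index_mod_fact:
  assumes c: "c \<in> QZ_dual_carrier" and "n \<le> m"
  shows "dual_index m c mod fact n = dual_index n c"
proof -
  obtain k :: nat where k: "fact m = fact n * k"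
    using fact_dvd[OF \<open>n \<le> m\<close>, where 'a = nat] by (rule dvdE)
  then have "k > 0" by (metis fact_nonzero mult_0_right neq0_conv)
  have "(1::rat) / of_nat (fact n) = of_nat k * (1 / of_nat (fact m))"
    using k \<open>k > 0\<close> by (simp add: field_simps)
  then have "c (1 / of_nat (fact n)) = c (1 / of_nat (fact m)) ^ k"
    using QZ_char_of_nat_mult[OF c] by (simp only:)
  also have "\<dots> = root_unity (fact m) (dual_index m c * k)"
    using dual_index(2)[OF c, of m] by (simp add: root_unity_pow)
  also have "\<dots> = root_unity (fact n) (dual_index m c)"
    unfolding k by (rule root_unity_cancel_factor[OF \<open>k > 0\<close>])
  finally show ?thesis by (rule dual_index_eqI[OF c, symmetric])
qed

lemma QZ_dual_carrier_mult:
  "c \<in> QZ_dual_carrier \<Longrightarrow> d \<in> QZ_dual_carrier \<Longrightarrow> (\<lambda>a. c a * d a) \<in> QZ_dual_carrier"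
  unfolding QZ_dual_carrier_def by (auto simp: norm_mult)

lemma dual_index_mult:
  assumes "c \<in> QZ_dual_carrier" "d \<in> QZ_dual_carrier"
  shows "dual_index n (\<lambda>a. c a * d a) = (dual_index n c + dual_index n d) mod fact n"
  using dual_index_eqI[OF QZ_dual_carrier_mult[OF assms]] dual_index(2)[OF assms(1)]
    dual_index(2)[OF assms(2)] by (simp add: root_unity_mult)

definition QZ_std_char :: "rat \<Rightarrow> complex" where
  "QZ_std_char q = exp (2 * of_real pi * \<i> * of_real (of_rat q))"

lemma QZ_std_char_in_carrier: "QZ_std_char \<in> QZ_dual_carrier"
  unfolding QZ_dual_carrier_def QZ_std_char_def
  by (auto simp: of_rat_add distrib_left exp_add norm_exp_eq_Re)

lemma dual_index_QZ_std_char: "dual_index n QZ_std_char = 1 mod fact n"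
  by (rule dual_index_eqI[OF QZ_std_char_in_carrier])
    (simp add: QZ_std_char_def root_unity_def of_rat_divide del: of_nat_fact)

lemma openin_QZ_dual_eval_unit_fraction:
  assumes "N > 0"
  shows "openin QZ_dual_topology {c \<in> QZ_dual_carrier. c (1 / of_nat N) = z}"
proof -
  let ?q = "1 / of_nat N :: rat"
  define R where "R = {w::complex. w ^ N = 1}"
  have "finite R"
    unfolding R_def using complex_roots_unity[of N] assms by simp
  then have "open (- (R - {z}))" by (intro open_Compl finite_imp_closed) simp
  then have "openin (product_topology (\<lambda>_. euclidean) UNIV)
      {c \<in> topspace (product_topology (\<lambda>_. euclidean) UNIV). c ?q \<in> - (R - {z})}"
    by (intro openin_continuous_map_preimage[OF continuous_map_product_projection]) auto
  then have "openin QZ_dual_topology (QZ_dual_carrier \<inter> {c. c ?q \<in> - (R - {z})})"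
    unfolding QZ_dual_topology_def by (intro openin_subtopology_Int2) simp
  moreover have "c ?q \<in> R" if "c \<in> QZ_dual_carrier" for c
    using QZ_char_unit_fraction_pow[OF that assms] unfolding R_def by simp
  then have "QZ_dual_carrier \<inter> {c. c ?q \<in> - (R - {z})} = {c \<in> QZ_dual_carrier. c ?q = z}"
    by auto
  ultimately show ?thesis by simp
qed

lemma compactin_sequence_cluster_point:
  assumes "compactin X K" "\<And>n. s n \<in> K"
  shows "\<exists>y\<in>K. \<forall>U. openin X U \<and> y \<in> U \<longrightarrow> (\<exists>\<^sub>F n in sequentially. s n \<in> U)"
proof (rule ccontr)
  assume "\<not> ?thesis"
  then have "\<forall>y\<in>K. \<exists>U. openin X U \<and> y \<in> U \<and> (\<forall>\<^sub>F n in sequentially. s n \<notin> U)"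
    by (auto simp: not_frequently)
  then obtain U where U: "\<forall>y\<in>K. openin X (U y) \<and> y \<in> U y \<and> (\<forall>\<^sub>F n in sequentially. s n \<notin> U y)"
    by (rule bchoice[elim_format]) blast
  have "\<exists>\<F>. finite \<F> \<and> \<F> \<subseteq> U ` K \<and> K \<subseteq> \<Union>\<F>"
    by (rule compactinD[OF assms(1)]) (use U in auto)
  then obtain F where F: "finite F" "F \<subseteq> K" "K \<subseteq> \<Union> (U ` F)"
    unfolding ex_finite_subset_image by blast
  have "\<forall>y\<in>F. \<forall>\<^sub>F n in sequentially. s n \<notin> U y" using U F(2) by blast
  then have "\<forall>\<^sub>F n in sequentially. \<forall>y\<in>F. s n \<notin> U y"
    by (rule eventually_ball_finite[OF F(1)])
  then obtain N where "\<forall>n\<ge>N. \<forall>y\<in>F. s n \<notin> U y"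
    unfolding eventually_sequentially by blast
  with F(3) assms(2)[of N] show False by blast
qed

lemma totally_disconnected_compact_open_nbhd:
  assumes "locally_compact_space X" "Hausdorff_space X" "totally_disconnected_space X"
    and "openin X W" "x \<in> W"
  obtains V where "openin X V" "compactin X V" "x \<in> V" "V \<subseteq> W"
proof -
  have x: "x \<in> topspace X" using assms(4,5) openin_subset by blast
  obtain U L where UL: "openin X U" "compactin X L" "x \<in> U" "U \<subseteq> L"
    using assms(1) x unfolding locally_compact_space_def by blast
  have "{x} \<in> connected_components_of X"
    using assms(3) x unfolding connected_components_of_def totally_disconnected_space_def
    by (metis imageI)
  moreover have "compactin X {x}" "openin X (W \<inter> U)" "{x} \<subseteq> W \<inter> U"
    using x assms(4,5) UL(1,3) by auto
  ultimately obtain V V' where V: "openin X V" "openin X V'" "disjnt V V'" "V \<union> V' = topspace X"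
      "{x} \<subseteq> V" "V \<subseteq> W \<inter> U"
    by (rule wilder_locally_compact_component_thm[OF assms(1,2)])
  have "topspace X - V = V'" using V(3,4) openin_subset[OF V(2)] by (auto simp: disjnt_def)
  then have "closedin X V" using V(2) openin_subset[OF V(1)] by (simp add: closedin_def)
  moreover have "V \<subseteq> L" using V(6) UL(4) by blast
  ultimately have "compactin X V" using closed_compactin[OF UL(2)] by blast
  then show thesis using V(1,5,6) by (intro that) auto
qed

lemma (in group) mult_inv_cancel_left: "a \<in> carrier G \<Longrightarrow> c \<in> carrier G \<Longrightarrow> a \<otimes> (inv a \<otimes> c) = c"
  by (simp add: m_assoc[symmetric])

lemma (in group) subgroup_nat_pow_closed: "subgroup H G \<Longrightarrow> a \<in> H \<Longrightarrow> a [^] (n::nat) \<in> H"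
  by (induction n) (auto simp: subgroup.one_closed subgroup.m_closed)

lemma (in group) inv_mult_in_subgroup_sym:
  assumes "subgroup H G" "a \<in> carrier G" "b \<in> carrier G" "inv a \<otimes> b \<in> H"
  shows "inv b \<otimes> a \<in> H"
proof -
  have "inv (inv a \<otimes> b) \<in> H" using assms(1,4) by (rule subgroup.m_inv_closed)
  then show ?thesis using assms(2,3) by (simp add: inv_mult_group)
qed

lemma (in group) inv_mult_in_subgroup_trans:
  assumes "subgroup H G" "a \<in> carrier G" "b \<in> carrier G" "c \<in> carrier G"
    and "inv a \<otimes> b \<in> H" "inv b \<otimes> c \<in> H"
  shows "inv a \<otimes> c \<in> H"
proof -
  have "(inv a \<otimes> b) \<otimes> (inv b \<otimes> c) \<in> H" using assms(1,5,6) by (rule subgroup.m_closed)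
  also have "(inv a \<otimes> b) \<otimes> (inv b \<otimes> c) = inv a \<otimes> (b \<otimes> (inv b \<otimes> c))"
    using assms(2-4) by (simp add: m_assoc)
  also have "b \<otimes> (inv b \<otimes> c) = c" using assms(3,4) by (rule mult_inv_cancel_left)
  finally show ?thesis .
qed

lemma (in group) generate_mult_stable:
  assumes "W \<subseteq> carrier G" "V \<subseteq> carrier G"
    and "\<And>w v. w \<in> W \<Longrightarrow> v \<in> V \<Longrightarrow> w \<otimes> v \<in> V \<and> inv w \<otimes> v \<in> V"
    and "h \<in> generate G W" "v \<in> V"
  shows "h \<otimes> v \<in> V"
  using assms(4,5)
proof (induction arbitrary: v)
  case one then show ?case using assms(2) by auto
next
  case (incl h) then show ?case using assms(3) by blast
next
  case (inv h) then show ?case using assms(3) by blast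
next
  case (eng h1 h2)
  have "h1 \<in> carrier G" "h2 \<in> carrier G" "v \<in> carrier G"
    using generate_in_carrier[OF assms(1)] eng.hyps eng.prems assms(2) by auto
  moreover have "h1 \<otimes> (h2 \<otimes> v) \<in> V" using eng.IH eng.prems by blast
  ultimately show ?case by (simp add: m_assoc)
qed

locale topgroup = group G for G (structure) +
  fixes T :: "'a topology"
  assumes topspace_eq: "topspace T = carrier G"
    and continuous_map_mult: "continuous_map (prod_topology T T) T (\<lambda>(x, y). x \<otimes> y)"
    and continuous_map_inv: "continuous_map T T (\<lambda>x. inv x)"
begin

lemma continuous_map_left_mult:
  assumes "a \<in> carrier G" shows "continuous_map T T (\<lambda>y. a \<otimes> y)"
proof -
  have "continuous_map T (prod_topology T T) (\<lambda>y. (a, y))"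
    using assms topspace_eq by (simp add: continuous_map_pairwise o_def)
  from continuous_map_compose[OF this continuous_map_mult] show ?thesis by (simp add: o_def)
qed

lemma openin_left_mult_preimage:
  "a \<in> carrier G \<Longrightarrow> openin T U \<Longrightarrow> openin T {y \<in> carrier G. a \<otimes> y \<in> U}"
  using openin_continuous_map_preimage[OF continuous_map_left_mult] topspace_eq by simp

lemma closedin_left_mult_preimage:
  "a \<in> carrier G \<Longrightarrow> closedin T C \<Longrightarrow> closedin T {y \<in> carrier G. a \<otimes> y \<in> C}"
  using closedin_continuous_map_preimage[OF continuous_map_left_mult] topspace_eq by simp

lemma openin_inv_preimage: "openin T U \<Longrightarrow> openin T {y \<in> carrier G. inv y \<in> U}"
  using openin_continuous_map_preimage[OF continuous_map_inv] topspace_eq by simp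

lemma limitin_mult:
  assumes "limitin T f a F" "limitin T g b F"
  shows "limitin T (\<lambda>n. f n \<otimes> g n) (a \<otimes> b) F"
proof -
  have "limitin (prod_topology T T) (\<lambda>n. (f n, g n)) (a, b) F"
    using assms by (simp add: limitin_pairwise o_def)
  from continuous_map_limit[OF continuous_map_mult this] show ?thesis by (simp add: o_def)
qed

lemma limitin_inv: "limitin T f a F \<Longrightarrow> limitin T (\<lambda>n. inv f n) (inv a) F"
  using continuous_map_limit[OF continuous_map_inv] by (simp add: o_def)

lemma discrete_topology_if_openin_one:
  assumes "openin T {\<one>}" shows "T = discrete_topology (carrier G)"
proof -
  have "openin T {y}" if "y \<in> carrier G" for y
  proof -
    have "{z \<in> carrier G. inv y \<otimes> z \<in> {\<one>}} = {y}"
      using that by (auto simp: inv_solve_left')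
    then show ?thesis using openin_left_mult_preimage[OF inv_closed[OF that] assms] by simp
  qed
  then have "discrete_topology (carrier G) = T"
    unfolding discrete_topology_unique using topspace_eq by blast
  then show ?thesis by simp
qed

lemma openin_subgroupI:
  assumes "subgroup H G" "openin T W" "\<one> \<in> W" "W \<subseteq> H"
  shows "openin T H"
proof (subst openin_subopen, intro ballI)
  fix h assume h: "h \<in> H"
  then have hc: "h \<in> carrier G" using subgroup.subset[OF assms(1)] by blast
  let ?S = "{y \<in> carrier G. inv h \<otimes> y \<in> W}"
  have "?S \<subseteq> H"
  proof
    fix y assume y: "y \<in> ?S"
    then have "h \<otimes> (inv h \<otimes> y) \<in> H" using subgroup.m_closed[OF assms(1) h] assms(4) by blast
    then show "y \<in> H" using y hc by (simp add: m_assoc[symmetric])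
  qed
  moreover have "openin T ?S" "h \<in> ?S"
    using openin_left_mult_preimage[OF inv_closed[OF hc] assms(2)] hc assms(3) by auto
  ultimately show "\<exists>S. openin T S \<and> h \<in> S \<and> S \<subseteq> H" by blast
qed

lemma closedin_open_subgroup:
  assumes "subgroup H G" "openin T H" shows "closedin T H"
proof -
  have "topspace T - H = (\<Union>g \<in> carrier G - H. {y \<in> carrier G. inv g \<otimes> y \<in> H})"
  proof (intro equalityI subsetI)
    fix y assume y: "y \<in> topspace T - H"
    then have "y \<in> carrier G" "inv y \<otimes> y \<in> H"
      using topspace_eq subgroup.one_closed[OF assms(1)] by auto
    with y show "y \<in> (\<Union>g \<in> carrier G - H. {y \<in> carrier G. inv g \<otimes> y \<in> H})" by blast
  next
    fix y assume "y \<in> (\<Union>g \<in> carrier G - H. {y \<in> carrier G. inv g \<otimes> y \<in> H})"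
    then obtain g where g: "g \<in> carrier G" "g \<notin> H" "y \<in> carrier G" "inv g \<otimes> y \<in> H" by blast
    have "inv y \<otimes> g \<in> H" by (rule inv_mult_in_subgroup_sym[OF assms(1) g(1,3,4)])
    have "y \<notin> H"
    proof
      assume "y \<in> H"
      then have "y \<otimes> (inv y \<otimes> g) \<in> H" using \<open>inv y \<otimes> g \<in> H\<close> subgroup.m_closed[OF assms(1)] by blast
      with g(1-3) show False by (simp add: mult_inv_cancel_left)
    qed
    with g(3) show "y \<in> topspace T - H" using topspace_eq by simp
  qed
  moreover have "openin T (\<Union>g \<in> carrier G - H. {y \<in> carrier G. inv g \<otimes> y \<in> H})"
    using openin_left_mult_preimage[OF inv_closed assms(2)] by blast
  ultimately show ?thesis
    using subgroup.subset[OF assms(1)] topspace_eq by (simp add: closedin_def)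
qed

lemma limitin_in_left_coset:
  assumes "subgroup H G" "openin T H" "a \<in> carrier G" "\<And>n. s n \<in> carrier G"
    and "limitin T s y F" "\<forall>\<^sub>F n in F. inv a \<otimes> s n \<in> H" "F \<noteq> bot"
  shows "inv a \<otimes> y \<in> H"
proof -
  have "closedin T {z \<in> carrier G. inv a \<otimes> z \<in> H}"
    using closedin_left_mult_preimage[OF inv_closed closedin_open_subgroup] assms(1-3) by blast
  moreover have "\<forall>\<^sub>F n in F. s n \<in> {z \<in> carrier G. inv a \<otimes> z \<in> H}"
    using assms(4,6) by simp
  ultimately show ?thesis using limitin_closedin[OF assms(5)] assms(7) by blast
qed

lemma compact_absorbing_nbhd:
  assumes "openin T V" "compactin T V"
  shows "\<exists>B. openin T B \<and> \<one> \<in> B \<and> (\<forall>b\<in>B. \<forall>v\<in>V. b \<otimes> v \<in> V)"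
proof -
  have Vc: "V \<subseteq> carrier G" using openin_subset[OF assms(1)] topspace_eq by simp
  let ?M = "{p \<in> topspace (prod_topology T T). (\<lambda>(a, v). a \<otimes> v) p \<in> V}"
  have M: "openin (prod_topology T T) ?M"
    by (rule openin_continuous_map_preimage[OF continuous_map_mult assms(1)])
  have "(\<one>, v) \<in> ?M" if "v \<in> V" for v
    using that Vc topspace_eq by auto
  then have "{\<one>} \<times> V \<subseteq> ?M" by blast
  then have "\<exists>B A. openin T B \<and> openin T A \<and> \<one> \<in> B \<and> V \<subseteq> A \<and> B \<times> A \<subseteq> ?M"
    using tube_lemma_right[OF M assms(2)] topspace_eq by simp
  then obtain B A where B: "openin T B" "openin T A" "\<one> \<in> B" "V \<subseteq> A" "B \<times> A \<subseteq> ?M"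
    by blast
  have "b \<otimes> v \<in> V" if "b \<in> B" "v \<in> V" for b v
  proof -
    have "(b, v) \<in> B \<times> A" using that B(4) by auto
    then have "(b, v) \<in> ?M" by (rule subsetD[OF B(5)])
    then show ?thesis by simp
  qed
  then show ?thesis using B(1,3) by blast
qed

lemma pow_in_open_subgroup:
  assumes "compactin T K" "subgroup K G" "x \<in> K" "subgroup H G" "openin T H"
  obtains d :: nat where "d > 0" "x [^] d \<in> H"
proof -
  have Kc: "K \<subseteq> carrier G" using subgroup.subset[OF assms(2)] .
  have "openin T {y \<in> carrier G. inv k \<otimes> y \<in> H} \<and> k \<in> {y \<in> carrier G. inv k \<otimes> y \<in> H}"
    if "k \<in> K" for k
    using openin_left_mult_preimage[OF inv_closed assms(5)] that Kc subgroup.one_closed[OF assms(4)]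
    by auto
  then have "\<exists>\<F>. finite \<F> \<and> \<F> \<subseteq> (\<lambda>k. {y \<in> carrier G. inv k \<otimes> y \<in> H}) ` K \<and> K \<subseteq> \<Union>\<F>"
    by (intro compactinD[OF assms(1)]) auto
  then obtain F where F: "finite F" "F \<subseteq> K" "K \<subseteq> (\<Union>k\<in>F. {y \<in> carrier G. inv k \<otimes> y \<in> H})"
    unfolding ex_finite_subset_image by blast
  have "\<exists>k\<in>F. inv k \<otimes> x [^] j \<in> H" for j :: nat
    using F(3) subgroup_nat_pow_closed[OF assms(2,3)] by blast
  then obtain g where g: "\<And>j::nat. g j \<in> F \<and> inv (g j) \<otimes> x [^] j \<in> H" by metis
  have "\<not> inj g"
    using finite_subset[OF _ F(1), of "range g"] g finite_imageD[of g UNIV] by auto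
  then obtain i j :: nat where ij: "i < j" "g i = g j"
    unfolding inj_def by (metis linorder_neqE_nat)
  have xc: "x \<in> carrier G" and gc: "g i \<in> carrier G" using assms(3) Kc g F(2) by blast+
  have "inv (x [^] i) \<otimes> x [^] j \<in> H"
    using inv_mult_in_subgroup_trans[OF assms(4) nat_pow_closed[OF xc] gc nat_pow_closed[OF xc]]
      inv_mult_in_subgroup_sym[OF assms(4) gc nat_pow_closed[OF xc]] g[of i] g[of j] ij(2)
    by simp
  moreover have "x [^] j = x [^] i \<otimes> x [^] (j - i)"
    using xc ij(1) by (simp add: nat_pow_mult)
  then have "inv (x [^] i) \<otimes> x [^] j = x [^] (j - i)"
    using xc by (simp add: m_assoc[symmetric])
  ultimately show thesis using ij(1) by (intro that[of "j - i"]) auto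
qed

end

text \<open>\<open>x\<close> raised to the profinite integer \<open>c\<close>; the value is unspecified unless the powers
  converge in a Hausdorff space.\<close>
definition dual_power :: "('a, 'b) monoid_scheme \<Rightarrow> 'a topology \<Rightarrow> 'a \<Rightarrow> (rat \<Rightarrow> complex) \<Rightarrow> 'a" where
  "dual_power G T x c = (THE y. limitin T (\<lambda>n. x [^]\<^bsub>G\<^esub> dual_index n c) y sequentially)"

locale td_lc_group = topgroup +
  assumes Hausdorff: "Hausdorff_space T"
    and locally_compact: "locally_compact_space T"
    and totally_disconnected: "totally_disconnected_space T"
begin

lemma compact_open_subgroup:
  assumes "openin T U" "\<one> \<in> U"
  obtains H where "subgroup H G" "openin T H" "compactin T H" "H \<subseteq> U"
proof -
  obtain V where V: "openin T V" "compactin T V" "\<one> \<in> V" "V \<subseteq> U"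
    using totally_disconnected_compact_open_nbhd[OF locally_compact Hausdorff totally_disconnected assms] .
  have Vc: "V \<subseteq> carrier G" using openin_subset[OF V(1)] topspace_eq by simp
  obtain B where B: "openin T B" "\<one> \<in> B" "\<forall>b\<in>B. \<forall>v\<in>V. b \<otimes> v \<in> V"
    using compact_absorbing_nbhd[OF V(1,2)] by blast
  define W where "W = B \<inter> {w \<in> carrier G. inv w \<in> B}"
  have W: "openin T W" "\<one> \<in> W" "W \<subseteq> carrier G"
    unfolding W_def using B openin_inv_preimage by auto
  have WV: "w \<otimes> v \<in> V \<and> inv w \<otimes> v \<in> V" if "w \<in> W" "v \<in> V" for w v
    using that B(3) unfolding W_def by blast
  let ?H = "generate G W"
  have H: "subgroup ?H G" by (rule generate_is_subgroup[OF W(3)])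
  have "?H \<subseteq> V"
  proof
    fix h assume h: "h \<in> ?H"
    have "h \<otimes> \<one> \<in> V" by (rule generate_mult_stable[OF W(3) Vc WV h V(3)])
    then show "h \<in> V" using generate_in_carrier[OF W(3) h] by simp
  qed
  moreover have "openin T ?H"
    using openin_subgroupI[OF H W(1,2)] generate.incl[of _ W G] by blast
  moreover have "compactin T ?H"
    using closed_compactin[OF V(2)] closedin_open_subgroup[OF H] calculation by blast
  ultimately show thesis using H V(4) by (intro that[of ?H]) auto
qed

lemma limitin_if_open_subgroups:
  assumes "y \<in> carrier G" "\<And>n. s n \<in> carrier G"
    and "\<And>H. subgroup H G \<Longrightarrow> openin T H \<Longrightarrow> \<forall>\<^sub>F n in F. inv y \<otimes> s n \<in> H"
  shows "limitin T s y F"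
  unfolding limitin_def
proof (intro conjI allI impI)
  show "y \<in> topspace T" using assms(1) topspace_eq by simp
  fix U assume U: "openin T U \<and> y \<in> U"
  have "openin T {z \<in> carrier G. y \<otimes> z \<in> U}" "\<one> \<in> {z \<in> carrier G. y \<otimes> z \<in> U}"
    using openin_left_mult_preimage[OF assms(1)] U assms(1) by auto
  then obtain H where H: "subgroup H G" "openin T H" "compactin T H"
      "H \<subseteq> {z \<in> carrier G. y \<otimes> z \<in> U}"
    by (rule compact_open_subgroup)
  show "\<forall>\<^sub>F n in F. s n \<in> U"
    using assms(3)[OF H(1,2)]
  proof (rule eventually_mono)
    fix n assume "inv y \<otimes> s n \<in> H"
    then have "y \<otimes> (inv y \<otimes> s n) \<in> U" using H(4) by blast
    then show "s n \<in> U" using assms(1,2) by (simp add: mult_inv_cancel_left)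
  qed
qed

lemma compact_Cauchy_sequence_convergent:
  assumes "compactin T K" "\<And>n. s n \<in> K"
    and "\<And>H. subgroup H G \<Longrightarrow> openin T H \<Longrightarrow> \<exists>N. \<forall>n\<ge>N. inv (s N) \<otimes> s n \<in> H"
  obtains y where "limitin T s y sequentially"
proof -
  have Kc: "K \<subseteq> carrier G"
    using compactin_subset_topspace[OF assms(1)] by (simp only: topspace_eq)
  obtain y where y: "y \<in> K" "\<forall>U. openin T U \<and> y \<in> U \<longrightarrow> (\<exists>\<^sub>F n in sequentially. s n \<in> U)"
    using compactin_sequence_cluster_point[where s = s, OF assms(1,2)] by blast
  have yc: "y \<in> carrier G" and sc: "\<And>n. s n \<in> carrier G" using y(1) assms(2) Kc by auto
  have "\<forall>\<^sub>F n in sequentially. inv y \<otimes> s n \<in> H" if H: "subgroup H G" "openin T H" for H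
  proof -
    obtain N where N: "\<forall>n\<ge>N. inv (s N) \<otimes> s n \<in> H" using assms(3)[OF H] by blast
    have "openin T {z \<in> carrier G. inv y \<otimes> z \<in> H}" "y \<in> {z \<in> carrier G. inv y \<otimes> z \<in> H}"
      using openin_left_mult_preimage[OF inv_closed[OF yc] H(2)] yc subgroup.one_closed[OF H(1)]
      by auto
    then have "\<exists>\<^sub>F n in sequentially. s n \<in> {z \<in> carrier G. inv y \<otimes> z \<in> H}"
      using y(2) by blast
    then have "\<exists>\<^sub>F n in sequentially. inv y \<otimes> s n \<in> H"
      by (rule frequently_elim1) simp
    then obtain m where m: "m \<ge> N" "inv y \<otimes> s m \<in> H"
      unfolding frequently_sequentially by blast
    have "inv (s m) \<otimes> s N \<in> H"
      using inv_mult_in_subgroup_sym[OF H(1) sc sc] N m(1) by blast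
    then have "inv (s m) \<otimes> s n \<in> H" if "n \<ge> N" for n
      using inv_mult_in_subgroup_trans[OF H(1) sc sc sc] N that by blast
    then have "inv y \<otimes> s n \<in> H" if "n \<ge> N" for n
      using inv_mult_in_subgroup_trans[OF H(1) yc sc sc] m(2) that by blast
    then show ?thesis unfolding eventually_sequentially by blast
  qed
  then have "limitin T s y sequentially" using limitin_if_open_subgroups yc sc by blast
  then show thesis by (rule that)
qed

lemma dual_power_eqI:
  assumes "limitin T (\<lambda>n. x [^] dual_index n c) y sequentially"
  shows "dual_power G T x c = y"
  unfolding dual_power_def
proof (rule the_equality)
  fix y' assume "limitin T (\<lambda>n. x [^] dual_index n c) y' sequentially"
  then show "y' = y" using limitin_Hausdorff_unique[OF _ assms _ Hausdorff] by simp
qed (rule assms)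

context
  fixes K x
  assumes K: "compactin T K" "subgroup K G" and x: "x \<in> K"
begin

lemma generator_in_carrier: "x \<in> carrier G"
  using x subgroup.subset[OF K(2)] by blast

lemma pow_fact_mult_in_open_subgroup:
  assumes "subgroup H G" "openin T H"
  shows "\<exists>N. \<forall>n\<ge>N. \<forall>q::nat. x [^] (fact n * q) \<in> H"
proof -
  obtain d :: nat where d: "d > 0" "x [^] d \<in> H" by (rule pow_in_open_subgroup[OF K x assms])
  have "x [^] (fact n * q) \<in> H" if n: "d \<le> n" for n q :: nat
  proof -
    have "d dvd fact n" using dvd_fact[of d n] d(1) n by simp
    then obtain r where "fact n = d * r" by (rule dvdE)
    then have "x [^] (fact n * q) = (x [^] d) [^] (r * q)"
      using generator_in_carrier by (simp add: nat_pow_pow mult.assoc)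
    then show ?thesis using subgroup_nat_pow_closed[OF assms(1) d(2)] by simp
  qed
  then show ?thesis by blast
qed

lemma pow_dual_index_in_coset:
  assumes "subgroup H G" "\<And>q::nat. x [^] (fact N * q) \<in> H" "c \<in> QZ_dual_carrier" "N \<le> n"
  shows "inv (x [^] dual_index N c) \<otimes> x [^] dual_index n c \<in> H"
proof -
  let ?q = "dual_index n c div fact N"
  have "dual_index n c = dual_index N c + fact N * ?q"
    using dual_index_mod_fact[OF assms(3,4)] by (metis mod_mult_div_eq)
  then have "x [^] dual_index n c = x [^] dual_index N c \<otimes> x [^] (fact N * ?q)"
    using generator_in_carrier by (metis nat_pow_mult)
  then show ?thesis
    using assms(2)[of ?q] generator_in_carrier by (simp add: m_assoc[symmetric])
qed

lemma limitin_dual_power: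
  assumes "c \<in> QZ_dual_carrier"
  shows "limitin T (\<lambda>n. x [^] dual_index n c) (dual_power G T x c) sequentially"
proof -
  obtain y where y: "limitin T (\<lambda>n. x [^] dual_index n c) y sequentially"
  proof (rule compact_Cauchy_sequence_convergent[OF K(1)])
    show "x [^] dual_index n c \<in> K" for n using subgroup_nat_pow_closed[OF K(2) x] .
    fix H assume H: "subgroup H G" "openin T H"
    obtain N where "\<forall>n\<ge>N. \<forall>q::nat. x [^] (fact n * q) \<in> H"
      using pow_fact_mult_in_open_subgroup[OF H] by blast
    then have N: "x [^] (fact N * q) \<in> H" for q :: nat by blast
    show "\<exists>N. \<forall>n\<ge>N. inv (x [^] dual_index N c) \<otimes> x [^] dual_index n c \<in> H"
      using pow_dual_index_in_coset[OF H(1) N assms] by blast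
  qed
  with dual_power_eqI[OF y] show ?thesis by simp
qed

lemma dual_power_in_carrier: "c \<in> QZ_dual_carrier \<Longrightarrow> dual_power G T x c \<in> carrier G"
  using limitin_topspace[OF limitin_dual_power] topspace_eq by simp

lemma dual_power_in_coset:
  assumes "subgroup H G" "openin T H" "\<And>q::nat. x [^] (fact N * q) \<in> H" "c \<in> QZ_dual_carrier"
  shows "inv (x [^] dual_index N c) \<otimes> dual_power G T x c \<in> H"
proof (rule limitin_in_left_coset[OF assms(1,2) _ _ limitin_dual_power[OF assms(4)]])
  show "\<forall>\<^sub>F n in sequentially. inv (x [^] dual_index N c) \<otimes> x [^] dual_index n c \<in> H"
    unfolding eventually_sequentially using pow_dual_index_in_coset[OF assms(1,3,4)] by blast
qed (use generator_in_carrier in auto)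

lemma dual_power_inv_mult_in_open_subgroup:
  assumes "subgroup H G" "openin T H" "\<And>q::nat. x [^] (fact N * q) \<in> H"
    and "c \<in> QZ_dual_carrier" "d \<in> QZ_dual_carrier" "dual_index N d = dual_index N c"
  shows "inv (dual_power G T x c) \<otimes> dual_power G T x d \<in> H"
proof -
  let ?p = "x [^] dual_index N c"
  have p: "?p \<in> carrier G" using generator_in_carrier by simp
  have "inv ?p \<otimes> dual_power G T x c \<in> H" by (rule dual_power_in_coset[OF assms(1-4)])
  then have "inv (dual_power G T x c) \<otimes> ?p \<in> H"
    by (rule inv_mult_in_subgroup_sym[OF assms(1) p dual_power_in_carrier[OF assms(4)]])
  moreover have "inv ?p \<otimes> dual_power G T x d \<in> H"
    using dual_power_in_coset[OF assms(1-3,5)] unfolding assms(6) .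
  ultimately show ?thesis
    by (rule inv_mult_in_subgroup_trans[OF assms(1) dual_power_in_carrier[OF assms(4)] p
          dual_power_in_carrier[OF assms(5)]])
qed

lemma dual_power_mult:
  assumes c: "c \<in> QZ_dual_carrier" and d: "d \<in> QZ_dual_carrier"
  shows "dual_power G T x (\<lambda>a. c a * d a) = dual_power G T x c \<otimes> dual_power G T x d"
proof -
  let ?p = "\<lambda>c n. x [^] dual_index n c"
  define q where "q n = (dual_index n c + dual_index n d) div fact n" for n
  have xc: "x \<in> carrier G" by (rule generator_in_carrier)
  have split: "?p (\<lambda>a. c a * d a) n = (?p c n \<otimes> ?p d n) \<otimes> inv (x [^] (fact n * q n))" for n
  proof -
    have "dual_index n c + dual_index n d = dual_index n (\<lambda>a. c a * d a) + fact n * q n"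
      unfolding q_def dual_index_mult[OF c d] by simp
    then have "?p c n \<otimes> ?p d n = ?p (\<lambda>a. c a * d a) n \<otimes> x [^] (fact n * q n)"
      using xc by (simp add: nat_pow_mult)
    then show ?thesis using xc by (simp add: m_assoc)
  qed
  have "limitin T (\<lambda>n. x [^] (fact n * q n)) \<one> sequentially"
  proof (rule limitin_if_open_subgroups)
    fix H assume H: "subgroup H G" "openin T H"
    obtain N where "\<forall>n\<ge>N. \<forall>q::nat. x [^] (fact n * q) \<in> H"
      using pow_fact_mult_in_open_subgroup[OF H] by blast
    then show "\<forall>\<^sub>F n in sequentially. inv \<one> \<otimes> x [^] (fact n * q n) \<in> H"
      unfolding eventually_sequentially using xc by auto
  qed (use xc in auto)
  then have "limitin T (?p (\<lambda>a. c a * d a))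
      ((dual_power G T x c \<otimes> dual_power G T x d) \<otimes> inv \<one>) sequentially"
    unfolding split by (intro limitin_mult limitin_inv limitin_dual_power c d)
  then show ?thesis
    using dual_power_eqI dual_power_in_carrier[OF c] dual_power_in_carrier[OF d] by simp
qed

lemma continuous_map_dual_power: "continuous_map QZ_dual_topology T (dual_power G T x)"
  unfolding continuous_map_def
proof (intro conjI allI impI)
  show "dual_power G T x \<in> topspace QZ_dual_topology \<rightarrow> topspace T"
    using dual_power_in_carrier topspace_eq by (auto simp: QZ_dual_topology_def)
  fix U assume U: "openin T U"
  show "openin QZ_dual_topology {c \<in> topspace QZ_dual_topology. dual_power G T x c \<in> U}"
  proof (subst openin_subopen, intro ballI)
    fix c assume "c \<in> {c \<in> topspace QZ_dual_topology. dual_power G T x c \<in> U}"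
    then have c: "c \<in> QZ_dual_carrier" and cU: "dual_power G T x c \<in> U"
      by (auto simp: QZ_dual_topology_def)
    let ?y = "dual_power G T x c"
    have y: "?y \<in> carrier G" by (rule dual_power_in_carrier[OF c])
    have "openin T {z \<in> carrier G. ?y \<otimes> z \<in> U}" "\<one> \<in> {z \<in> carrier G. ?y \<otimes> z \<in> U}"
      using openin_left_mult_preimage[OF y U] y cU by auto
    then obtain H where H: "subgroup H G" "openin T H" "compactin T H"
        "H \<subseteq> {z \<in> carrier G. ?y \<otimes> z \<in> U}"
      by (rule compact_open_subgroup)
    obtain N where "\<forall>n\<ge>N. \<forall>q::nat. x [^] (fact n * q) \<in> H"
      using pow_fact_mult_in_open_subgroup[OF H(1,2)] by blast
    then have N: "x [^] (fact N * q) \<in> H" for q :: nat by blast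
    let ?S = "{d \<in> QZ_dual_carrier. d (1 / of_nat (fact N)) = c (1 / of_nat (fact N))}"
    have "?S \<subseteq> {c \<in> topspace QZ_dual_topology. dual_power G T x c \<in> U}"
    proof
      fix d assume "d \<in> ?S"
      then have d: "d \<in> QZ_dual_carrier" and dN: "dual_index N d = dual_index N c"
        unfolding dual_index_def by auto
      have "inv ?y \<otimes> dual_power G T x d \<in> H"
        by (rule dual_power_inv_mult_in_open_subgroup[OF H(1,2) N c d dN])
      then have "?y \<otimes> (inv ?y \<otimes> dual_power G T x d) \<in> U" using H(4) by blast
      then show "d \<in> {c \<in> topspace QZ_dual_topology. dual_power G T x c \<in> U}"
        using d y dual_power_in_carrier[OF d] by (simp add: mult_inv_cancel_left QZ_dual_topology_def)
    qed
    moreover have "openin QZ_dual_topology ?S" "c \<in> ?S"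
      using openin_QZ_dual_eval_unit_fraction[of "fact N"] c by auto
    ultimately show "\<exists>S. openin QZ_dual_topology S \<and> c \<in> S \<and>
        S \<subseteq> {c \<in> topspace QZ_dual_topology. dual_power G T x c \<in> U}"
      by blast
  qed
qed

lemma dual_power_QZ_std_char: "dual_power G T x QZ_std_char = x"
proof -
  have "\<forall>\<^sub>F n in sequentially. x = x [^] dual_index n QZ_std_char"
    unfolding eventually_sequentially
  proof (intro exI allI impI)
    fix n :: nat assume "2 \<le> n"
    then have "(2::nat) \<le> fact n" using fact_ge_self[of n] by linarith
    then show "x = x [^] dual_index n QZ_std_char"
      using generator_in_carrier by (simp add: dual_index_QZ_std_char)
  qed
  moreover have "limitin T (\<lambda>n. x) x sequentially"
    using generator_in_carrier topspace_eq by simp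
  ultimately have "limitin T (\<lambda>n. x [^] dual_index n QZ_std_char) x sequentially"
    by (rule limitin_transform_eventually)
  then show ?thesis by (rule dual_power_eqI)
qed

end

end

lemma td_lc_group_of_LCA_group:
  assumes "LCA_group G T" "totally_disconnected_space T"
  shows "td_lc_group G T"
proof -
  have "group G" "topgroup_axioms G T" "td_lc_group_axioms T"
    using assms unfolding LCA_group_def topological_group_def topgroup_axioms_def td_lc_group_axioms_def
    by auto
  then show ?thesis by (intro td_lc_group.intro topgroup.intro)
qed

theorem lemma12:
  fixes G :: "('a, 'b) monoid_scheme" and T :: "'a topology"
  assumes "LCA_group G T"
    and "T \<noteq> discrete_topology (carrier G)"
    and "totally_disconnected_space T"
    and "torsion_free G"
  shows "\<exists>f. f \<in> hom QZ_dual G \<and> continuous_map QZ_dual_topology T f \<and>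
             (\<exists>c \<in> carrier QZ_dual. f c \<noteq> \<one>\<^bsub>G\<^esub>)"
proof -
  interpret td_lc_group G T by (rule td_lc_group_of_LCA_group[OF assms(1,3)])
  have "openin T (carrier G)" using openin_topspace[of T] topspace_eq by simp
  then obtain K where K: "subgroup K G" "openin T K" "compactin T K" "K \<subseteq> carrier G"
    by (rule compact_open_subgroup) simp
  have "K \<noteq> {\<one>\<^bsub>G\<^esub>}" using discrete_topology_if_openin_one K(2) assms(2) by blast
  then obtain x where x: "x \<in> K" "x \<noteq> \<one>\<^bsub>G\<^esub>" using subgroup.one_closed[OF K(1)] by blast
  have "dual_power G T x \<in> hom QZ_dual G"
    using dual_power_in_carrier[OF K(3,1) x(1)] dual_power_mult[OF K(3,1) x(1)]
    by (auto simp: hom_def QZ_dual_def)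
  moreover have "continuous_map QZ_dual_topology T (dual_power G T x)"
    by (rule continuous_map_dual_power[OF K(3,1) x(1)])
  moreover have "QZ_std_char \<in> carrier QZ_dual" "dual_power G T x QZ_std_char \<noteq> \<one>\<^bsub>G\<^esub>"
    using QZ_std_char_in_carrier dual_power_QZ_std_char[OF K(3,1) x(1)] x(2)
    by (auto simp: QZ_dual_def)
  ultimately show ?thesis by blast
qed

end
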